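(* Let $D=((a_n),(b_n))$ be an almost periodic divisor. Then there is $C_0<\infty$ such that ${\rm card}\{n:|a_n-c|\le1\}+{\rm card}\{n:|b_n-c|\le1\}<C_0$ for all $c\in\mathbb{C}$. If moreover $D$ is almost periodic with a regular indexing, then $\sup_n|a_n-b_n|<\infty$.
   Context: A divisor $D=((a_n)_{n\in\mathbb{N}},(b_n)_{n\in\mathbb{N}})$ consists of two sequences in $\mathbb{C}$ (repetitions allowed) without finite accumulation points. $\tau$ is an $\varepsilon$-almost period of $D$ if there are bijections $\sigma,\sigma':\mathbb{N}\to\mathbb{N}$ with $|a_n+\tau-a_{\sigma(n)}|<\varepsilon$ and $|b_n+\tau-b_{\sigma'(n)}|<\varepsilon$ for all $n$. $D$ is almost periodic if for every $\varepsilon>0$ there is $L$ such that every disc of radius $L$ contains an $\varepsilon$-almost period; it is almost periodic with a regular indexing if in addition these $\varepsilon$-almost periods can be chosen so that $\sigma=\sigma'$. *)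

theory Defs
  imports "HOL-Analysis.Analysis"
begin

definition no_finite_acc :: "(nat \<Rightarrow> complex) \<Rightarrow> bool" where
  "no_finite_acc a \<longleftrightarrow> (\<forall>R::real. finite {n. norm (a n) \<le> R})"

definition divisor :: "(nat \<Rightarrow> complex) \<Rightarrow> (nat \<Rightarrow> complex) \<Rightarrow> bool" where
  "divisor a b \<longleftrightarrow> no_finite_acc a \<and> no_finite_acc b"

definition almost_period :: "(nat \<Rightarrow> complex) \<Rightarrow> (nat \<Rightarrow> complex) \<Rightarrow> real \<Rightarrow> complex \<Rightarrow> bool" where
  "almost_period a b \<epsilon> \<tau> \<longleftrightarrow>
     (\<exists>\<sigma> \<sigma>'. bij \<sigma> \<and> bij \<sigma>' \<and>
        (\<forall>n. norm (a n + \<tau> - a (\<sigma> n)) < \<epsilon>) \<and>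
        (\<forall>n. norm (b n + \<tau> - b (\<sigma>' n)) < \<epsilon>))"

definition almost_period_regular :: "(nat \<Rightarrow> complex) \<Rightarrow> (nat \<Rightarrow> complex) \<Rightarrow> real \<Rightarrow> complex \<Rightarrow> bool" where
  "almost_period_regular a b \<epsilon> \<tau> \<longleftrightarrow>
     (\<exists>\<sigma>. bij \<sigma> \<and>
        (\<forall>n. norm (a n + \<tau> - a (\<sigma> n)) < \<epsilon>) \<and>
        (\<forall>n. norm (b n + \<tau> - b (\<sigma> n)) < \<epsilon>))"

definition almost_periodic_divisor :: "(nat \<Rightarrow> complex) \<Rightarrow> (nat \<Rightarrow> complex) \<Rightarrow> bool" where
  "almost_periodic_divisor a b \<longleftrightarrow>
     (\<forall>\<epsilon>>0. \<exists>L. \<forall>c. \<exists>\<tau>\<in>cball c L. almost_period a b \<epsilon> \<tau>)"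

definition almost_periodic_regular :: "(nat \<Rightarrow> complex) \<Rightarrow> (nat \<Rightarrow> complex) \<Rightarrow> bool" where
  "almost_periodic_regular a b \<longleftrightarrow>
     (\<forall>\<epsilon>>0. \<exists>L. \<forall>c. \<exists>\<tau>\<in>cball c L. almost_period_regular a b \<epsilon> \<tau>)"

end

theory Submission
  imports Defs
begin

(* Both parts of the theorem rest on one observation: if tau is a (1-)almost
   period of D that is close to -c, then the bijection sigma attached to tau
   moves every point of D near c into a fixed ball around the origin, whose
   radius does not depend on c.
   (1) Since sigma is injective, the number of points of a (resp. b) in the
       unit disc around c is bounded by the number of points of a (resp. b)
       in that fixed ball, which is finite because D has no finite
       accumulation point.
   (2) For a regular indexing a common sigma serves a and b, so
       |a n - b n| exceeds |a (sigma n) - b (sigma n)| by less than 2, and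
       sigma n ranges over the finitely many indices m with a m in the
       fixed ball. *)

lemma shifted_point_bounded:
  fixes x y c \<tau> :: "'a::real_normed_vector"
  assumes shift: "norm (x + \<tau> - y) < \<epsilon>" and near: "norm (x - c) \<le> r"
    and close: "norm (c + \<tau>) \<le> L"
  shows "norm y \<le> L + r + \<epsilon>"
proof -
  have "y = (c + \<tau>) + (x - c) - (x + \<tau> - y)" by (simp add: algebra_simps)
  then have "norm y \<le> norm (c + \<tau>) + norm (x - c) + norm (x + \<tau> - y)"
    by (metis norm_triangle_ineq norm_triangle_ineq4 order_trans add_right_mono)
  with shift near close show ?thesis by linarith
qed

lemma common_shift_difference:
  fixes x y x' y' \<tau> :: "'a::real_normed_vector"
  assumes "norm (x + \<tau> - x') < \<epsilon>" and "norm (y + \<tau> - y') < \<epsilon>"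
  shows "norm (x - y) \<le> norm (x' - y') + 2 * \<epsilon>"
proof -
  have "x - y = (x' - y') + (x + \<tau> - x') - (y + \<tau> - y')" by (simp add: algebra_simps)
  then have "norm (x - y) \<le> norm (x' - y') + norm (x + \<tau> - x') + norm (y + \<tau> - y')"
    by (metis norm_triangle_ineq norm_triangle_ineq4 order_trans add_right_mono)
  with assms show ?thesis by linarith
qed

lemma card_near_le_card_ball:
  fixes a :: "nat \<Rightarrow> complex"
  assumes fin: "no_finite_acc a" and inj: "inj \<sigma>"
    and shift: "\<forall>n. norm (a n + \<tau> - a (\<sigma> n)) < \<epsilon>" and close: "norm (c + \<tau>) \<le> L"
  shows "card {n. norm (a n - c) \<le> r} \<le> card {m. norm (a m) \<le> L + r + \<epsilon>}"
proof (rule card_inj_on_le)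
  show "inj_on \<sigma> {n. norm (a n - c) \<le> r}"
    using inj inj_on_subset by blast
  show "finite {m. norm (a m) \<le> L + r + \<epsilon>}"
    using fin unfolding no_finite_acc_def by blast
  show "\<sigma> ` {n. norm (a n - c) \<le> r} \<subseteq> {m. norm (a m) \<le> L + r + \<epsilon>}"
    using shifted_point_bounded[OF shift[rule_format] _ close] by blast
qed

lemma relatively_dense_near_negation:
  fixes P :: "'a::real_normed_vector \<Rightarrow> bool"
  assumes "\<forall>c. \<exists>\<tau>\<in>cball c L. P \<tau>"
  shows "\<exists>\<tau>. norm (c + \<tau>) \<le> L \<and> P \<tau>"
proof -
  obtain \<tau> where "\<tau> \<in> cball (- c) L" "P \<tau>" using assms by blast
  moreover have "norm (c + \<tau>) = dist (- c) \<tau>"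
    by (simp add: dist_norm norm_minus_commute add.commute)
  ultimately show ?thesis by (intro exI[of _ \<tau>]) simp
qed

lemma almost_periodic_uniformly_locally_finite:
  assumes "divisor a b" and "almost_periodic_divisor a b"
  shows "\<exists>C0::real. \<forall>c::complex.
           real (card {n. norm (a n - c) \<le> 1} + card {n. norm (b n - c) \<le> 1}) < C0"
proof -
  have fin_a: "no_finite_acc a" and fin_b: "no_finite_acc b"
    using assms(1) unfolding divisor_def by auto
  obtain L where dense: "\<forall>c. \<exists>\<tau>\<in>cball c L. almost_period a b 1 \<tau>"
    using assms(2) unfolding almost_periodic_divisor_def by (meson zero_less_one)
  define N where "N = card {m. norm (a m) \<le> L + 1 + 1} + card {m. norm (b m) \<le> L + 1 + 1}"
  have card_le: "card {n. norm (a n - c) \<le> 1} + card {n. norm (b n - c) \<le> 1} \<le> N" for c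
  proof -
    obtain \<tau> where close: "norm (c + \<tau>) \<le> L" and "almost_period a b 1 \<tau>"
      using relatively_dense_near_negation[OF dense] by blast
    then obtain \<sigma> \<sigma>' where "bij \<sigma>" "bij \<sigma>'"
        and shift_a: "\<forall>n. norm (a n + \<tau> - a (\<sigma> n)) < 1"
        and shift_b: "\<forall>n. norm (b n + \<tau> - b (\<sigma>' n)) < 1"
      unfolding almost_period_def by blast
    have "card {n. norm (a n - c) \<le> 1} \<le> card {m. norm (a m) \<le> L + 1 + 1}"
      by (rule card_near_le_card_ball[OF fin_a bij_is_inj[OF \<open>bij \<sigma>\<close>] shift_a close])
    moreover have "card {n. norm (b n - c) \<le> 1} \<le> card {m. norm (b m) \<le> L + 1 + 1}"
      by (rule card_near_le_card_ball[OF fin_b bij_is_inj[OF \<open>bij \<sigma>'\<close>] shift_b close])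
    ultimately show ?thesis unfolding N_def by (rule add_le_mono)
  qed
  have "real (card {n. norm (a n - c) \<le> 1} + card {n. norm (b n - c) \<le> 1}) < real N + 1" for c
    using of_nat_mono[OF card_le[of c], where 'a=real] by linarith
  then show ?thesis by blast
qed

text \<open>A common almost period \<open>\<tau>\<close> close to \<open>-a n\<close> relates
  \<open>a n - b n\<close> to \<open>a m - b m\<close> for an index \<open>m\<close> in a fixed finite set.\<close>
lemma almost_periodic_regular_bounded_difference:
  assumes fin: "no_finite_acc a" and "almost_periodic_regular a b"
  shows "bdd_above (range (\<lambda>n. norm (a n - b n)))"
proof -
  obtain L where dense: "\<forall>c. \<exists>\<tau>\<in>cball c L. almost_period_regular a b 1 \<tau>"
    using assms(2) unfolding almost_periodic_regular_def by (meson zero_less_one)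
  define S where "S = {m. norm (a m) \<le> L + 1}"
  have fin_S: "finite S" using fin unfolding S_def no_finite_acc_def by blast
  show ?thesis
  proof (rule bdd_aboveI2)
    fix n
    obtain \<tau> where close: "norm (a n + \<tau>) \<le> L" and "almost_period_regular a b 1 \<tau>"
      using relatively_dense_near_negation[OF dense] by blast
    then obtain \<sigma> where shift_a: "\<forall>n. norm (a n + \<tau> - a (\<sigma> n)) < 1"
        and shift_b: "\<forall>n. norm (b n + \<tau> - b (\<sigma> n)) < 1"
      unfolding almost_period_regular_def by blast
    have "norm (a (\<sigma> n)) \<le> L + 0 + 1"
      by (rule shifted_point_bounded[OF shift_a[rule_format] _ close]) simp
    then have "\<sigma> n \<in> S" unfolding S_def by simp
    then have "norm (a (\<sigma> n) - b (\<sigma> n)) \<le> (\<Sum>m\<in>S. norm (a m - b m))"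
      by (rule member_le_sum) (simp_all add: fin_S)
    moreover have "norm (a n - b n) \<le> norm (a (\<sigma> n) - b (\<sigma> n)) + 2 * 1"
      using common_shift_difference shift_a shift_b by blast
    ultimately show "norm (a n - b n) \<le> (\<Sum>m\<in>S. norm (a m - b m)) + 2" by simp
  qed
qed

theorem mainTheorem9:
  fixes a b :: "nat \<Rightarrow> complex"
  assumes "divisor a b"
    and "almost_periodic_divisor a b"
  shows "(\<exists>C0::real. \<forall>c::complex.
            real (card {n. norm (a n - c) \<le> 1} + card {n. norm (b n - c) \<le> 1}) < C0)
       \<and> (almost_periodic_regular a b \<longrightarrow> bdd_above (range (\<lambda>n. norm (a n - b n))))"
proof
  show "\<exists>C0::real. \<forall>c::complex.
          real (card {n. norm (a n - c) \<le> 1} + card {n. norm (b n - c) \<le> 1}) < C0"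
    using almost_periodic_uniformly_locally_finite[OF assms] .
  show "almost_periodic_regular a b \<longrightarrow> bdd_above (range (\<lambda>n. norm (a n - b n)))"
  proof
    have "no_finite_acc a" using assms(1) unfolding divisor_def by simp
    then show "almost_periodic_regular a b \<Longrightarrow> bdd_above (range (\<lambda>n. norm (a n - b n)))"
      by (rule almost_periodic_regular_bounded_difference)
  qed
qed

end
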